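(* Let $f:E\to\mathbb{R}$ be either convex or continuously differentiable (possibly non-convex), and let $\varepsilon>0$. Then the iterates of Algorithm UAGMsDR with accuracy $\varepsilon$ satisfy, for every $k\ge0$, $$A_kf(x^k)\le\min_{x\in E}\psi_k(x)+\frac{A_k\varepsilon}{2}=\psi_k(v^k)+\frac{A_k\varepsilon}{2},$$ and $$A_k\ge\sup_{\nu\in[0,1]:\,M_\nu<\infty}\ c_\nu\,\frac{k^{\frac{1+3\nu}{1+\nu}}\,\varepsilon^{\frac{1-\nu}{1+\nu}}}{2^{\frac{1+3\nu}{1+\nu}}\,M_\nu^{\frac{2}{1+\nu}}},\qquad c_\nu=\left[\frac{1+\nu}{1-\nu}\right]^{\frac{1-\nu}{1+\nu}}\ (\nu<1),\ c_1=1.$$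
   Context: $E$ is a finite-dimensional real vector space with a norm $\|\cdot\|$; $E^*$ is its dual, $\langle g,x\rangle$ denotes the value of $g\in E^*$ at $x\in E$, and $\|g\|_*=\max\{\langle g,x\rangle:\|x\|\le 1\}$. For $g\in E^*$, $g^{\#}$ denotes a (fixed) element $s\in E$ with $\|s\|\le 1$ and $\langle g,s\rangle=\|g\|_*$. A prox-function $d:E\to\mathbb{R}$ is continuously differentiable, convex, $1$-strongly convex with respect to $\|\cdot\|$ and satisfies $\min_E d=0$; its Bregman divergence is $V(x,z)=d(x)-d(z)-\langle\nabla d(z),x-z\rangle$. $\nabla f(x)$ denotes the gradient of $f$ if $f$ is differentiable and otherwise a subgradient of the convex function $f$ (as selected by the algorithm). For $\nu\in[0,1]$, $M_\nu\in(0,+\infty]$ denotes the smallest constant such that $\|\nabla f(x)-\nabla f(y)\|_*\le M_\nu\|x-y\|^\nu$ for all $x,y\in E$ (Hölder continuity of the (sub)gradient; $M_\nu=+\infty$ if no such constant exists). Algorithm UAGMsDR (input $x^0\in E$, accuracy $\varepsilon>0$): set $A_0=0$, $v^0=x^0$, $\psi_0(x)=V(x,x^0)$. For $k=0,1,2,\dots$: 1. Choose $\beta_k\in\arg\min_{\beta\in[0,1]}f(v^k+\beta(x^k-v^k))$, set $y^k=v^k+\beta_k(x^k-v^k)$, and choose $\nabla f(y^k)$ (the gradient, or a subgradient in the convex nonsmooth case) such that $\langle\nabla f(y^k),v^k-y^k\rangle\ge0$ (such a choice exists by optimality of $\beta_k$). 2. $h_{k+1}\in\arg\min_{h\ge0}f(y^k-h(\nabla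 f(y^k))^{\#})$, $x^{k+1}=y^k-h_{k+1}(\nabla f(y^k))^{\#}$; $a_{k+1}$ is the largest solution of $f(y^k)-\frac{a_{k+1}^2}{2(A_k+a_{k+1})}\|\nabla f(y^k)\|_*^2+\frac{\varepsilon a_{k+1}}{2(A_k+a_{k+1})}=f(x^{k+1})$. 3. $A_{k+1}=A_k+a_{k+1}$; $\psi_{k+1}(x)=\psi_k(x)+a_{k+1}\{f(y^k)+\langle\nabla f(y^k),x-y^k\rangle\}$; $v^{k+1}=\arg\min_{x\in E}\psi_{k+1}(x)$. All minima are assumed attained, and $\nabla f(y^k)\ne0$ for all iterations considered. *)

theory Defs
  imports "HOL-Analysis.Analysis"
begin

text \<open>E is modelled as a Euclidean space 'a (any finite-dimensional real vector space is
isomorphic to one); the dual space E* is identified with 'a through the inner product,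
so that the pairing is g \<bullet> x. The norm on E is an arbitrary norm nrm, not the Euclidean one.\<close>

definition is_norm :: "('a::real_vector \<Rightarrow> real) \<Rightarrow> bool" where
  "is_norm nrm \<longleftrightarrow> (\<forall>x y. nrm (x + y) \<le> nrm x + nrm y) \<and>
     (\<forall>c x. nrm (c *\<^sub>R x) = \<bar>c\<bar> * nrm x) \<and> (\<forall>x. nrm x = 0 \<longleftrightarrow> x = 0)"

definition dual_norm :: "('a::real_inner \<Rightarrow> real) \<Rightarrow> 'a \<Rightarrow> real" where
  "dual_norm nrm g = Sup {g \<bullet> x | x. nrm x \<le> 1}"

definition C1_fun :: "('a::euclidean_space \<Rightarrow> real) \<Rightarrow> bool" where
  "C1_fun f \<longleftrightarrow> (\<exists>G. (\<forall>x. (f has_derivative (\<lambda>h. G x \<bullet> h)) (at x)) \<and> continuous_on UNIV G)"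

definition subgrads :: "('a::real_inner \<Rightarrow> real) \<Rightarrow> 'a \<Rightarrow> 'a set" where
  "subgrads f x = {g. \<forall>z. f x + g \<bullet> (z - x) \<le> f z}"

definition grads :: "('a::real_inner \<Rightarrow> real) \<Rightarrow> 'a \<Rightarrow> 'a set" where
  "grads f x = {g. (f has_derivative (\<lambda>h. g \<bullet> h)) (at x)}"

definition Dset :: "('a::real_inner \<Rightarrow> real) \<Rightarrow> 'a \<Rightarrow> 'a set" where
  "Dset f x = (if convex_on UNIV f then subgrads f x else grads f x)"

text \<open>Real power t^\<nu> for t \<ge> 0 with the convention 0^0 = 1.\<close>
definition hpow :: "real \<Rightarrow> real \<Rightarrow> real" where
  "hpow t \<nu> = (if \<nu> = 0 then 1 else t powr \<nu>)"

text \<open>Hoelder constant M_\<nu> (smallest constant; +\<infinity> if none exists).\<close>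
definition holder_const ::
  "('a::euclidean_space \<Rightarrow> real) \<Rightarrow> ('a \<Rightarrow> real) \<Rightarrow> real \<Rightarrow> ereal" where
  "holder_const nrm f \<nu> = Inf (ereal ` {M. 0 \<le> M \<and> (\<forall>x y gx gy. gx \<in> Dset f x \<longrightarrow> gy \<in> Dset f y \<longrightarrow>
       dual_norm nrm (gx - gy) \<le> M * hpow (nrm (x - y)) \<nu>)})"

definition bregman :: "('a::real_inner \<Rightarrow> real) \<Rightarrow> ('a \<Rightarrow> 'a) \<Rightarrow> 'a \<Rightarrow> 'a \<Rightarrow> real" where
  "bregman d gd x z = d x - d z - gd z \<bullet> (x - z)"

definition prox_function ::
  "('a::euclidean_space \<Rightarrow> real) \<Rightarrow> ('a \<Rightarrow> real) \<Rightarrow> ('a \<Rightarrow> 'a) \<Rightarrow> bool" where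
  "prox_function nrm d gd \<longleftrightarrow>
     (\<forall>x. (d has_derivative (\<lambda>h. gd x \<bullet> h)) (at x)) \<and> continuous_on UNIV gd \<and>
     convex_on UNIV d \<and>
     (\<forall>x y. d y \<ge> d x + gd x \<bullet> (y - x) + (1/2) * (nrm (y - x))\<^sup>2) \<and>
     (\<exists>z. d z = 0) \<and> (\<forall>z. 0 \<le> d z)"

definition psi_fun ::
  "('a::real_inner \<Rightarrow> real) \<Rightarrow> ('a \<Rightarrow> 'a) \<Rightarrow> ('a \<Rightarrow> real) \<Rightarrow> 'a \<Rightarrow>
   (nat \<Rightarrow> real) \<Rightarrow> (nat \<Rightarrow> 'a) \<Rightarrow> (nat \<Rightarrow> 'a) \<Rightarrow> nat \<Rightarrow> 'a \<Rightarrow> real" where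
  "psi_fun d gd f x0 a y g k z =
     bregman d gd z x0 + (\<Sum>i<k. a (Suc i) * (f (y i) + g i \<bullet> (z - y i)))"

definition c_nu :: "real \<Rightarrow> real" where
  "c_nu \<nu> = (if \<nu> = 1 then 1 else ((1 + \<nu>) / (1 - \<nu>)) powr ((1 - \<nu>) / (1 + \<nu>)))"

definition rate_bound :: "real \<Rightarrow> real \<Rightarrow> real \<Rightarrow> nat \<Rightarrow> real" where
  "rate_bound M \<nu> \<epsilon> k = c_nu \<nu> * (real k powr ((1 + 3*\<nu>) / (1 + \<nu>)) * \<epsilon> powr ((1 - \<nu>) / (1 + \<nu>)))
      / (2 powr ((1 + 3*\<nu>) / (1 + \<nu>)) * M powr (2 / (1 + \<nu>)))"

end

theory Submission
  imports Defs
begin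

text \<open>Each estimate function psi_k is the prox-function plus an affine function, so it grows
  at least like (1/2) nrm (z - v_k)^2 around its minimiser v_k. Together with the line-search
  properties f(y_k) \<le> f(x_k) and g_k(v_k - y_k) \<ge> 0 and the equation defining a_{k+1}, this
  propagates A_k f(x_k) \<le> psi_k(v_k) + A_k \<epsilon>/2 by induction.

  For the rate, Hoelder continuity of the (sub)gradient gives, along the direction g_k^#, the
  descent f(y_k) - f(x_{k+1}) \<ge> t G_k - M t^(1+\<nu>)/(1+\<nu>) for every t \<ge> 0, with G_k the dual norm
  of g_k. Inserted into the equation for a_{k+1} and combined with weighted AM-GM, this yields
  a_{k+1}^(2-q) \<ge> C A_{k+1}^(1-q) with q = (1-\<nu>)/(1+\<nu>); concavity of t \<mapsto> t^(1/(2-q)) turns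
  this into A_k \<ge> C (k/2)^(2-q).\<close>

section \<open>Subgradients and one-dimensional descent\<close>

lemma convex_on_subgrads_nonempty:
  fixes f :: "'a::euclidean_space \<Rightarrow> real"
  assumes cvx: "convex_on UNIV f"
  shows "subgrads f z \<noteq> {}"
proof -
  have ne: "(z, f z) \<in> epigraph UNIV f" "(z, f z - 1) \<in> {z} \<times> {..<f z}"
    by (simp_all add: mem_epigraph)
  have disj: "epigraph UNIV f \<inter> {z} \<times> {..<f z} = {}" by (auto simp: epigraph_def)
  have "convex ({z} \<times> {..<f z})" by (intro convex_Times) auto
  from separating_hyperplane_sets[OF convex_epigraphI[OF cvx] this _ _ disj] ne
  obtain p b where p: "p \<noteq> 0" and above: "\<forall>q\<in>epigraph UNIV f. p \<bullet> q \<le> b"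
    and below: "\<forall>q\<in>{z} \<times> {..<f z}. b \<le> p \<bullet> q"
    by blast
  obtain a \<alpha> where a: "p = (a, \<alpha>)" by (cases p)
  have key: "a \<bullet> w + \<alpha> * t \<le> a \<bullet> z + \<alpha> * r" if "f w \<le> t" "r < f z" for w t r
    using above[rule_format, of "(w, t)"] below[rule_format, of "(z, r)"] that
    by (simp add: a mem_epigraph)
  have "\<alpha> < 0"
  proof (rule ccontr)
    assume "\<not> \<alpha> < 0"
    have "\<alpha> * (f z + 1) \<le> \<alpha> * (f z - 1)" using key[of z "f z + 1" "f z - 1"] by simp
    then have "\<alpha> = 0" using \<open>\<not> \<alpha> < 0\<close> by (simp add: algebra_simps)
    then have "a \<noteq> 0" using p a by (auto simp: zero_prod_def)
    have "a \<bullet> (z + a) \<le> a \<bullet> z" using key[of "z + a" "f (z + a)" "f z - 1"] \<open>\<alpha> = 0\<close> by simp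
    then have "a \<bullet> a \<le> 0" by (simp add: inner_add_right)
    then show False using \<open>a \<noteq> 0\<close> inner_gt_zero_iff[of a] by linarith
  qed
  define g where "g = (- 1 / \<alpha>) *\<^sub>R a"
  have "f z + g \<bullet> (w - z) \<le> f w" for w
  proof -
    have "r \<le> f w - g \<bullet> (w - z)" if "r < f z" for r
    proof -
      have "\<alpha> * (f w - g \<bullet> (w - z)) \<le> \<alpha> * r"
        using key[OF order_refl that] \<open>\<alpha> < 0\<close> by (simp add: g_def algebra_simps)
      then show ?thesis using \<open>\<alpha> < 0\<close> by simp
    qed
    then have "f z \<le> f w - g \<bullet> (w - z)" by (rule dense_le)
    then show ?thesis by simp
  qed
  then show ?thesis unfolding subgrads_def by blast
qed

lemma holder_derivative_descent:
  fixes \<phi> \<phi>' :: "real \<Rightarrow> real"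
  assumes der: "\<And>u. (\<phi> has_real_derivative \<phi>' u) (at u)"
    and bd: "\<And>u. 0 < u \<Longrightarrow> \<phi>' u + c \<le> M * u powr \<nu>"
    and t: "0 \<le> t" and \<nu>: "0 \<le> \<nu>"
  shows "\<phi> t \<le> \<phi> 0 - t * c + M * t powr (1 + \<nu>) / (1 + \<nu>)"
proof -
  define \<psi> where "\<psi> u = \<phi> u + u * c - M * u powr (1 + \<nu>) / (1 + \<nu>)" for u
  have "\<psi> t \<le> \<psi> 0"
  proof (rule DERIV_nonpos_imp_decreasing_open[OF t])
    fix u :: real assume u: "0 < u" "u < t"
    have "((\<lambda>u. u powr (1 + \<nu>)) has_real_derivative (1 + \<nu>) * u powr \<nu>) (at u)"
      using has_real_derivative_powr[OF u(1), of "1 + \<nu>"] by simp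
    from DERIV_diff[OF DERIV_add[OF der DERIV_cmult_right[OF DERIV_ident]]
        DERIV_cdivide[OF DERIV_cmult[OF this, of M], of "1 + \<nu>"]]
    have "(\<psi> has_real_derivative \<phi>' u + c - M * u powr \<nu>) (at u)"
      unfolding \<psi>_def using \<nu> by simp
    then show "\<exists>y. (\<psi> has_real_derivative y) (at u) \<and> y \<le> 0" using bd[OF u(1)] by force
  next
    have "continuous_on {0..t} \<phi>" using der by (meson DERIV_isCont continuous_at_imp_continuous_on)
    then show "continuous_on {0..t} \<psi>"
      unfolding \<psi>_def using \<nu> by (intro continuous_intros continuous_on_powr') auto
  qed
  then show ?thesis unfolding \<psi>_def using \<nu> by simp
qed

lemma convex_holder_has_real_derivative:
  fixes \<phi> D :: "real \<Rightarrow> real"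
  assumes sub: "\<And>u w. \<phi> u + D u * (w - u) \<le> \<phi> w"
    and holder: "\<And>u w. \<bar>D u - D w\<bar> \<le> M * \<bar>u - w\<bar> powr \<nu>" and \<nu>: "0 < \<nu>"
  shows "(\<phi> has_real_derivative D u) (at u)"
proof -
  have "((\<lambda>w. (\<phi> w - \<phi> u) / (w - u) - D u) \<longlongrightarrow> 0) (at u)"
  proof (rule Lim_null_comparison)
    show "\<forall>\<^sub>F w in at u. norm ((\<phi> w - \<phi> u) / (w - u) - D u) \<le> M * \<bar>w - u\<bar> powr \<nu>"
    proof (rule eventually_at_filter[THEN iffD2, OF always_eventually], intro allI impI)
      fix w assume "w \<noteq> u"
      have "0 \<le> \<phi> w - \<phi> u - D u * (w - u)" "\<phi> w - \<phi> u - D u * (w - u) \<le> (D w - D u) * (w - u)"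
        using sub[of u w] sub[of w u] by (auto simp: algebra_simps)
      then have "\<bar>\<phi> w - \<phi> u - D u * (w - u)\<bar> \<le> \<bar>D w - D u\<bar> * \<bar>w - u\<bar>"
        by (simp add: abs_mult[symmetric])
      then have "\<bar>(\<phi> w - \<phi> u) / (w - u) - D u\<bar> \<le> \<bar>D w - D u\<bar>"
        using \<open>w \<noteq> u\<close> by (simp add: field_simps divide_le_eq)
      also have "\<dots> \<le> M * \<bar>w - u\<bar> powr \<nu>" using holder[of w u] by simp
      finally show "norm ((\<phi> w - \<phi> u) / (w - u) - D u) \<le> M * \<bar>w - u\<bar> powr \<nu>" by simp
    qed
    have "((\<lambda>w. \<bar>w - u\<bar> powr \<nu>) \<longlongrightarrow> 0) (at u)"
      using \<nu> by (intro tendsto_zero_powrI tendsto_rabs_zero LIM_zero[OF tendsto_ident_at]) auto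
    then show "((\<lambda>w. M * \<bar>w - u\<bar> powr \<nu>) \<longlongrightarrow> 0) (at u)" by (rule tendsto_mult_right_zero)
  qed
  then show ?thesis unfolding has_field_derivative_iff by (rule LIM_zero_cancel)
qed

lemma hpow_le_powr: "0 \<le> r \<Longrightarrow> r \<le> t \<Longrightarrow> 0 < t \<Longrightarrow> 0 \<le> \<nu> \<Longrightarrow> hpow r \<nu> \<le> t powr \<nu>"
  unfolding hpow_def by (auto intro: powr_mono2)

section \<open>Norms and dual norms\<close>

context
  fixes nrm :: "'a::euclidean_space \<Rightarrow> real"
  assumes nrm: "is_norm nrm"
begin

lemma is_norm_triangle: "nrm (x + y) \<le> nrm x + nrm y"
  using nrm unfolding is_norm_def by blast

lemma is_norm_scaleR: "nrm (c *\<^sub>R x) = \<bar>c\<bar> * nrm x"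
  using nrm unfolding is_norm_def by blast

lemma is_norm_eq_zero_iff: "nrm x = 0 \<longleftrightarrow> x = 0"
  using nrm unfolding is_norm_def by blast

lemma is_norm_zero [simp]: "nrm 0 = 0"
  by (simp add: is_norm_eq_zero_iff)

lemma is_norm_minus_commute: "nrm (x - y) = nrm (y - x)"
  using is_norm_scaleR[of "-1" "x - y"] by simp

lemma is_norm_nonneg: "0 \<le> nrm x"
  using is_norm_triangle[of x "- x"] is_norm_scaleR[of "-1" x] is_norm_eq_zero_iff[of 0] by simp

lemma is_norm_pos: "x \<noteq> 0 \<Longrightarrow> 0 < nrm x"
  using is_norm_nonneg[of x] is_norm_eq_zero_iff[of x] by linarith

lemma is_norm_sum_le: "finite S \<Longrightarrow> nrm (\<Sum>i\<in>S. F i) \<le> (\<Sum>i\<in>S. nrm (F i))"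
proof (induction S rule: finite_induct)
  case (insert i S)
  then show ?case using is_norm_triangle[of "F i" "sum F S"] by simp
qed simp

lemma is_norm_le_norm: "nrm x \<le> (\<Sum>b\<in>Basis. nrm b) * norm x"
proof -
  have "nrm x = nrm (\<Sum>b\<in>Basis. (x \<bullet> b) *\<^sub>R b)" by (simp add: euclidean_representation)
  also have "\<dots> \<le> (\<Sum>b\<in>Basis. nrm ((x \<bullet> b) *\<^sub>R b))"
    by (simp add: is_norm_sum_le)
  also have "\<dots> \<le> (\<Sum>b\<in>Basis. norm x * nrm b)"
    unfolding is_norm_scaleR
    by (intro sum_mono mult_right_mono) (auto simp: Basis_le_norm is_norm_nonneg)
  finally show ?thesis by (simp add: sum_distrib_left mult.commute)
qed

lemma is_norm_reverse_triangle: "\<bar>nrm x - nrm y\<bar> \<le> nrm (x - y)"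
  using is_norm_triangle[of y "x - y"] is_norm_triangle[of x "y - x"] is_norm_minus_commute[of x y]
  by (simp add: abs_le_iff)

lemma continuous_on_is_norm: "continuous_on UNIV nrm"
proof (rule lipschitz_on_continuous_on)
  show "(\<Sum>b\<in>Basis. nrm b)-lipschitz_on UNIV nrm"
  proof (rule lipschitz_onI)
    show "dist (nrm x) (nrm y) \<le> (\<Sum>b\<in>Basis. nrm b) * dist x y" for x y
      unfolding dist_real_def dist_norm
      using is_norm_reverse_triangle[of x y] is_norm_le_norm[of "x - y"] by (rule order_trans)
  qed (intro sum_nonneg is_norm_nonneg)
qed

text \<open>nrm attains a positive minimum on the Euclidean unit sphere.\<close>
lemma is_norm_ge_norm: "\<exists>m>0. \<forall>x. m * norm x \<le> nrm x"
proof -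
  have "(SOME b. b \<in> Basis) \<in> sphere (0::'a) 1" using SOME_Basis by simp
  then have "sphere (0::'a) 1 \<noteq> {}" by blast
  then obtain u where u: "u \<in> sphere 0 1" "\<And>w. w \<in> sphere 0 1 \<Longrightarrow> nrm u \<le> nrm w"
    using continuous_attains_inf[OF compact_sphere _ continuous_on_subset[OF continuous_on_is_norm]]
    by blast
  have "nrm u * norm x \<le> nrm x" for x
  proof (cases "x = 0")
    case False
    have "nrm u \<le> nrm ((1 / norm x) *\<^sub>R x)" using u(2) False by simp
    also have "\<dots> = nrm x / norm x" by (simp add: is_norm_scaleR)
    finally show ?thesis using False by (simp add: field_simps)
  qed (simp add: is_norm_eq_zero_iff)
  moreover have "nrm u > 0" using u(1) by (intro is_norm_pos) auto
  ultimately show ?thesis by blast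
qed

lemma bdd_above_dual_norm: "bdd_above {g \<bullet> x | x. nrm x \<le> 1}"
proof -
  obtain m where m: "m > 0" "\<And>x. m * norm x \<le> nrm x" using is_norm_ge_norm by blast
  show ?thesis
  proof (rule bdd_aboveI[of _ "norm g / m"], clarify)
    fix x assume "nrm x \<le> 1"
    then have "norm x \<le> 1 / m" using m by (metis dual_order.trans le_divide_eq mult.commute)
    then have "norm g * norm x \<le> norm g / m" by (simp add: mult_left_mono divide_inverse)
    then show "g \<bullet> x \<le> norm g / m" using norm_cauchy_schwarz[of g x] by linarith
  qed
qed

lemma dual_norm_ge: "nrm x \<le> 1 \<Longrightarrow> g \<bullet> x \<le> dual_norm nrm g"
  unfolding dual_norm_def by (rule cSup_upper[OF _ bdd_above_dual_norm]) blast

lemma dual_norm_nonneg: "0 \<le> dual_norm nrm g"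
  using dual_norm_ge[of 0] by simp

lemma inner_le_dual_norm: "g \<bullet> x \<le> dual_norm nrm g * nrm x"
proof (cases "x = 0")
  case False
  then have p: "nrm x > 0" by (rule is_norm_pos)
  have "g \<bullet> ((1 / nrm x) *\<^sub>R x) \<le> dual_norm nrm g"
    using p by (intro dual_norm_ge) (simp add: is_norm_scaleR)
  then show ?thesis using p by (simp add: field_simps)
qed (simp add: dual_norm_nonneg)

lemma abs_inner_le_dual_norm: "\<bar>g \<bullet> x\<bar> \<le> dual_norm nrm g * nrm x"
  using inner_le_dual_norm[of g x] inner_le_dual_norm[of g "- x"] is_norm_scaleR[of "-1" x] by simp

lemma abs_inner_le_dual_norm_unit: "nrm s \<le> 1 \<Longrightarrow> \<bar>g \<bullet> s\<bar> \<le> dual_norm nrm g"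
  using abs_inner_le_dual_norm[of g s] dual_norm_nonneg[of g] by (metis mult_left_le order_trans)

lemma dual_norm_pos: "g \<noteq> 0 \<Longrightarrow> 0 < dual_norm nrm g"
proof -
  assume "g \<noteq> 0"
  then have "0 < g \<bullet> g" by simp
  also have "\<dots> \<le> dual_norm nrm g * nrm g" by (rule inner_le_dual_norm)
  finally show ?thesis using is_norm_nonneg[of g] by (simp add: zero_less_mult_iff)
qed

section \<open>Hoelder descent along a ray\<close>

lemma hpow_norm_scaleR_le:
  "nrm s \<le> 1 \<Longrightarrow> 0 < \<bar>u\<bar> \<Longrightarrow> 0 \<le> \<nu> \<Longrightarrow> hpow (nrm (u *\<^sub>R s)) \<nu> \<le> \<bar>u\<bar> powr \<nu>"
  by (intro hpow_le_powr) (auto simp: is_norm_scaleR is_norm_nonneg mult_left_le)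

context
  fixes f :: "'a \<Rightarrow> real" and M \<nu> :: real and y s g :: 'a
  assumes M: "0 \<le> M" and \<nu>: "0 \<le> \<nu>" and s: "nrm s \<le> 1"
begin

lemma ray_descent:
  assumes der: "\<And>u. ((\<lambda>u. f (y - u *\<^sub>R s)) has_real_derivative - (D u \<bullet> s)) (at u)"
    and holder: "\<And>u. 0 < u \<Longrightarrow> dual_norm nrm (g - D u) \<le> M * hpow (nrm (u *\<^sub>R s)) \<nu>"
    and t: "0 \<le> t"
  shows "f (y - t *\<^sub>R s) \<le> f y - t * (g \<bullet> s) + M * t powr (1 + \<nu>) / (1 + \<nu>)"
proof -
  have "- (D u \<bullet> s) + g \<bullet> s \<le> M * u powr \<nu>" if u: "0 < u" for u
  proof -
    have "- (D u \<bullet> s) + g \<bullet> s \<le> dual_norm nrm (g - D u)"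
      using abs_inner_le_dual_norm_unit[OF s, of "g - D u"] by (simp add: inner_diff_left)
    also have "\<dots> \<le> M * hpow (nrm (u *\<^sub>R s)) \<nu>" by (rule holder[OF u])
    also have "\<dots> \<le> M * u powr \<nu>"
      using hpow_norm_scaleR_le[OF s _ \<nu>, of u] u by (simp add: M mult_left_mono)
    finally show ?thesis .
  qed
  from holder_derivative_descent[OF der this t \<nu>] show ?thesis by simp
qed

lemma C1_holder_descent:
  assumes C1: "C1_fun f"
    and holder: "\<And>x z gx gz. gx \<in> grads f x \<Longrightarrow> gz \<in> grads f z \<Longrightarrow>
                  dual_norm nrm (gx - gz) \<le> M * hpow (nrm (x - z)) \<nu>"
    and g: "g \<in> grads f y" and t: "0 \<le> t"
  shows "f (y - t *\<^sub>R s) \<le> f y - t * (g \<bullet> s) + M * t powr (1 + \<nu>) / (1 + \<nu>)"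
proof -
  obtain G where G: "\<And>x. (f has_derivative (\<lambda>h. G x \<bullet> h)) (at x)"
    using C1 unfolding C1_fun_def by blast
  show ?thesis
  proof (rule ray_descent[OF _ _ t])
    show "((\<lambda>u. f (y - u *\<^sub>R s)) has_real_derivative - (G (y - u *\<^sub>R s) \<bullet> s)) (at u)" for u
    proof -
      have "((\<lambda>u. y - u *\<^sub>R s) has_derivative (\<lambda>h. - (h *\<^sub>R s))) (at u)"
        by (intro derivative_eq_intros) auto
      from has_derivative_compose[OF this G]
      show ?thesis
        unfolding has_field_derivative_def by (rule has_derivative_eq_rhs) (auto simp: o_def)
    qed
    show "dual_norm nrm (g - G (y - u *\<^sub>R s)) \<le> M * hpow (nrm (u *\<^sub>R s)) \<nu>" for u
      using holder[OF g, of "G (y - u *\<^sub>R s)" "y - u *\<^sub>R s"] G by (simp add: grads_def)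
  qed
qed

lemma convex_holder_descent:
  assumes cvx: "convex_on UNIV f"
    and holder: "\<And>x z gx gz. gx \<in> subgrads f x \<Longrightarrow> gz \<in> subgrads f z \<Longrightarrow>
                  dual_norm nrm (gx - gz) \<le> M * hpow (nrm (x - z)) \<nu>"
    and g: "g \<in> subgrads f y" and t: "0 \<le> t"
  shows "f (y - t *\<^sub>R s) \<le> f y - t * (g \<bullet> s) + M * t powr (1 + \<nu>) / (1 + \<nu>)"
proof -
  define D where "D u = (SOME g. g \<in> subgrads f (y - u *\<^sub>R s))" for u
  have D: "D u \<in> subgrads f (y - u *\<^sub>R s)" for u
    unfolding D_def using convex_on_subgrads_nonempty[OF cvx] by (simp add: some_in_eq)
  have sub: "f (y - u *\<^sub>R s) + (u - w) * (D u \<bullet> s) \<le> f (y - w *\<^sub>R s)" for u w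
  proof -
    have "f (y - u *\<^sub>R s) + D u \<bullet> ((y - w *\<^sub>R s) - (y - u *\<^sub>R s)) \<le> f (y - w *\<^sub>R s)"
      using D[of u] unfolding subgrads_def by blast
    moreover have "(y - w *\<^sub>R s) - (y - u *\<^sub>R s) = (u - w) *\<^sub>R s" by (simp add: algebra_simps)
    ultimately show ?thesis by simp
  qed
  have holder_ray: "dual_norm nrm (D w - D u) \<le> M * \<bar>u - w\<bar> powr \<nu>" if "u \<noteq> w" for u w
  proof -
    have "dual_norm nrm (D w - D u) \<le> M * hpow (nrm ((y - w *\<^sub>R s) - (y - u *\<^sub>R s))) \<nu>"
      by (rule holder[OF D D])
    also have "(y - w *\<^sub>R s) - (y - u *\<^sub>R s) = (u - w) *\<^sub>R s" by (simp add: algebra_simps)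
    also have "M * hpow (nrm ((u - w) *\<^sub>R s)) \<nu> \<le> M * \<bar>u - w\<bar> powr \<nu>"
      using hpow_norm_scaleR_le[OF s _ \<nu>, of "u - w"] that by (simp add: M mult_left_mono)
    finally show ?thesis .
  qed
  show ?thesis
  proof (cases "\<nu> = 0")
    case True
    have "(g - D t) \<bullet> s \<le> dual_norm nrm (g - D t)"
      by (rule order_trans[OF abs_ge_self abs_inner_le_dual_norm_unit[OF s]])
    also have "\<dots> \<le> M" using holder[OF g D, of t] True by (simp add: hpow_def)
    finally have "g \<bullet> s - M \<le> D t \<bullet> s" by (simp add: inner_diff_left)
    then have "t * (g \<bullet> s - M) \<le> t * (D t \<bullet> s)" using t by (rule mult_left_mono)
    moreover have "f (y - t *\<^sub>R s) + t * (D t \<bullet> s) \<le> f y" using sub[of t 0] by simp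
    ultimately show ?thesis using True t by (simp add: algebra_simps)
  next
    case False
    show ?thesis
    proof (rule ray_descent[OF _ _ t])
      have holder': "\<bar>- (D u \<bullet> s) - - (D w \<bullet> s)\<bar> \<le> M * \<bar>u - w\<bar> powr \<nu>" for u w
      proof (cases "u = w")
        case False
        have "\<bar>- (D u \<bullet> s) - - (D w \<bullet> s)\<bar> = \<bar>(D w - D u) \<bullet> s\<bar>" by (simp add: inner_diff_left)
        also have "\<dots> \<le> dual_norm nrm (D w - D u)" by (rule abs_inner_le_dual_norm_unit[OF s])
        finally show ?thesis using holder_ray[OF False] by linarith
      qed simp
      have sub': "f (y - u *\<^sub>R s) + - (D u \<bullet> s) * (w - u) \<le> f (y - w *\<^sub>R s)" for u w
      proof -
        have "- (D u \<bullet> s) * (w - u) = (u - w) * (D u \<bullet> s)" by (simp add: algebra_simps)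
        then show ?thesis using sub[of u w] by linarith
      qed
      show "((\<lambda>u. f (y - u *\<^sub>R s)) has_real_derivative - (D u \<bullet> s)) (at u)" for u
        using convex_holder_has_real_derivative[of "\<lambda>u. f (y - u *\<^sub>R s)" "\<lambda>u. - (D u \<bullet> s)", OF sub' holder']
          \<nu> False by simp
      show "dual_norm nrm (g - D u) \<le> M * hpow (nrm (u *\<^sub>R s)) \<nu>" for u
        using holder[OF g D, of u] by simp
    qed
  qed
qed

lemma holder_descent:
  assumes f_class: "convex_on UNIV f \<or> C1_fun f"
    and holder: "\<And>x z gx gz. gx \<in> Dset f x \<Longrightarrow> gz \<in> Dset f z \<Longrightarrow>
                  dual_norm nrm (gx - gz) \<le> M * hpow (nrm (x - z)) \<nu>"
    and g: "g \<in> Dset f y" and t: "0 \<le> t"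
  shows "f (y - t *\<^sub>R s) \<le> f y - t * (g \<bullet> s) + M * t powr (1 + \<nu>) / (1 + \<nu>)"
proof (cases "convex_on UNIV f")
  case True
  show ?thesis using holder g by (intro convex_holder_descent[OF True _ _ t]) (simp_all add: Dset_def True)
next
  case False
  then have "C1_fun f" using f_class by simp
  show ?thesis using holder g by (intro C1_holder_descent[OF \<open>C1_fun f\<close> _ _ t]) (simp_all add: Dset_def False)
qed

end

end

section \<open>Estimate functions\<close>

lemma prox_affine_min_growth:
  fixes d :: "'a::euclidean_space \<Rightarrow> real"
  assumes prox: "prox_function nrm d gd"
    and \<phi>: "\<And>z. \<phi> z = d z + l \<bullet> z + c" and min: "\<And>z. \<phi> v \<le> \<phi> z"
  shows "\<phi> v + (1/2) * (nrm (z - v))\<^sup>2 \<le> \<phi> z"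
proof -
  have \<phi>_eq: "\<phi> = (\<lambda>z. d z + l \<bullet> z + c)" using \<phi> by blast
  have "(\<phi> has_derivative (\<lambda>h. (gd v + l) \<bullet> h)) (at v)"
    using prox unfolding \<phi>_eq prox_function_def
    by (auto intro!: derivative_eq_intros simp: inner_add_left)
  then have "(\<lambda>h. (gd v + l) \<bullet> h) = (\<lambda>h. 0)"
    using min by (intro differential_zero_maxmin[OF UNIV_I open_UNIV]) auto
  from fun_cong[OF this, of "gd v + l"] have "gd v = - l" by (simp add: add_eq_0_iff)
  moreover have "d z \<ge> d v + gd v \<bullet> (z - v) + (1/2) * (nrm (z - v))\<^sup>2"
    using prox unfolding prox_function_def by blast
  ultimately show ?thesis unfolding \<phi> by (simp add: inner_diff_right)
qed

lemma psi_fun_prox_plus_affine: "\<exists>l c. \<forall>z. psi_fun d gd f x0 a y g k z = d z + l \<bullet> z + c"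
proof (induction k)
  case 0
  show ?case
    by (intro exI[of _ "- gd x0"] exI[of _ "gd x0 \<bullet> x0 - d x0"])
       (simp add: psi_fun_def bregman_def inner_diff_right)
next
  case (Suc k)
  then obtain l c where "\<forall>z. psi_fun d gd f x0 a y g k z = d z + l \<bullet> z + c" by blast
  then show ?case
    by (intro exI[of _ "l + a (Suc k) *\<^sub>R g k"] exI[of _ "c + a (Suc k) * (f (y k) - g k \<bullet> y k)"])
       (simp add: psi_fun_def algebra_simps)
qed

section \<open>Step coefficients and the growth of A_k\<close>

lemma step_equation_iff:
  fixes A b Fy Fx G \<epsilon> :: real
  assumes "A + b \<noteq> 0"
  shows "Fy - b\<^sup>2 / (2 * (A + b)) * G\<^sup>2 + \<epsilon> * b / (2 * (A + b)) = Fx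
     \<longleftrightarrow> b\<^sup>2 * G\<^sup>2 = 2 * (A + b) * (Fy - Fx) + \<epsilon> * b"
proof -
  define P where "P = A + b"
  have P: "P \<noteq> 0" using assms by (simp add: P_def)
  have "Fy - b\<^sup>2 / (2 * P) * G\<^sup>2 + \<epsilon> * b / (2 * P) = (2 * P * Fy - b\<^sup>2 * G\<^sup>2 + \<epsilon> * b) / (2 * P)"
    using P by (simp add: field_simps)
  also have "\<dots> = Fx \<longleftrightarrow> 2 * P * Fy - b\<^sup>2 * G\<^sup>2 + \<epsilon> * b = Fx * (2 * P)"
    using P by (simp add: divide_eq_eq)
  finally show ?thesis unfolding P_def[symmetric] by (auto simp: algebra_simps)
qed

text \<open>The larger root of the quadratic equation for the step coefficient.\<close>
lemma step_equation_has_positive_root: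
  fixes A Fy Fx G \<epsilon> :: real
  assumes A: "0 \<le> A" and F: "Fx \<le> Fy" and G: "0 < G" and \<epsilon>: "0 < \<epsilon>"
  shows "\<exists>b>0. A + b \<noteq> 0 \<and> Fy - b\<^sup>2 / (2 * (A + b)) * G\<^sup>2 + \<epsilon> * b / (2 * (A + b)) = Fx"
proof -
  define F where "F = Fy - Fx"
  define c where "c = 2 * F + \<epsilon>"
  define s where "s = sqrt (c\<^sup>2 + 8 * A * F * G\<^sup>2)"
  define b where "b = (c + s) / (2 * G\<^sup>2)"
  have c: "0 < c" using F \<epsilon> by (simp add: c_def F_def)
  have s: "0 \<le> s" "s\<^sup>2 = c\<^sup>2 + 8 * A * F * G\<^sup>2" using A F by (simp_all add: s_def F_def)
  have b: "0 < b" using c s G by (simp add: b_def)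
  have "4 * G\<^sup>2 * (b\<^sup>2 * G\<^sup>2) = (c + s)\<^sup>2"
    using G by (simp add: b_def field_simps power2_eq_square)
  also have "\<dots> = 4 * G\<^sup>2 * (2 * (A + b) * F + \<epsilon> * b)"
    using s(2) G by (simp add: b_def c_def field_simps power2_eq_square)
  finally have "b\<^sup>2 * G\<^sup>2 = 2 * (A + b) * F + \<epsilon> * b" using G by simp
  then show ?thesis using b A step_equation_iff[of A b Fy G \<epsilon> Fx] unfolding F_def by auto
qed

text \<open>Weighted AM-GM with weights (1 + \<nu>)/2 and (1 - \<nu>)/2 eliminates G; this is where
  the constant c_nu comes from.\<close>
lemma young_holder_bound:
  fixes \<tau> X G \<epsilon> M \<nu> :: real
  assumes pos: "0 < \<tau>" "0 < X" "0 < G" "0 < \<epsilon>" "0 < M" and \<nu>: "0 \<le> \<nu>" "\<nu> \<le> 1"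
    and key: "\<tau> * G\<^sup>2 + \<epsilon> * X \<le> 2 * M * (\<tau> * G) powr (1 + \<nu>) / (1 + \<nu>)"
  shows "c_nu \<nu> * (\<epsilon> * X) powr ((1 - \<nu>) / (1 + \<nu>)) \<le> M powr (2 / (1 + \<nu>)) * \<tau>"
proof (cases "\<nu> = 1")
  case True
  then have "\<tau> * G\<^sup>2 + \<epsilon> * X \<le> M * \<tau>\<^sup>2 * G\<^sup>2"
    using key pos by (simp add: power_mult_distrib)
  then have "\<tau> * G\<^sup>2 < M * \<tau>\<^sup>2 * G\<^sup>2" using pos by (smt (verit) mult_pos_pos)
  then have "1 \<le> M * \<tau>" using pos by (simp add: power2_eq_square field_simps)
  then show ?thesis using True pos by (simp add: c_nu_def)
next
  case False
  define \<theta> where "\<theta> = (1 + \<nu>) / 2"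
  have \<theta>: "0 < \<theta>" "\<theta> < 1" "1 + \<nu> = 2 * \<theta>" using \<nu> False by (auto simp: \<theta>_def)
  have "(\<tau> * G\<^sup>2 / \<theta>) powr \<theta> * (\<epsilon> * X / (1 - \<theta>)) powr (1 - \<theta>)
      \<le> \<theta> * (\<tau> * G\<^sup>2 / \<theta>) + (1 - \<theta>) * (\<epsilon> * X / (1 - \<theta>))"
    using \<theta> pos by (intro Youngs_inequality_0) auto
  also have "\<dots> \<le> M * (\<tau> * G) powr (2 * \<theta>) / \<theta>"
    using key \<theta> by simp
  finally have "ln ((\<tau> * G\<^sup>2 / \<theta>) powr \<theta> * (\<epsilon> * X / (1 - \<theta>)) powr (1 - \<theta>))
      \<le> ln (M * (\<tau> * G) powr (2 * \<theta>) / \<theta>)"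
    using \<theta> pos by simp
  then have L: "(1 - \<theta>) * (ln \<theta> - ln (1 - \<theta>) + ln \<epsilon> + ln X) \<le> ln M + \<theta> * ln \<tau>"
    using \<theta> pos by (simp add: ln_mult ln_div power2_eq_square algebra_simps)
  define r where "r = (1 - \<theta>) / \<theta>"
  have q: "(1 - \<nu>) / (1 + \<nu>) = r" and p: "2 / (1 + \<nu>) = 1 / \<theta>"
    and "(1 + \<nu>) / (1 - \<nu>) = \<theta> / (1 - \<theta>)"
    using False \<nu> unfolding r_def \<theta>_def by (simp_all add: field_simps)
  then have c: "c_nu \<nu> = (\<theta> / (1 - \<theta>)) powr r" using False by (simp add: c_nu_def)
  have "ln (c_nu \<nu> * (\<epsilon> * X) powr ((1 - \<nu>) / (1 + \<nu>)))
      = r * (ln \<theta> - ln (1 - \<theta>) + ln \<epsilon> + ln X)"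
    unfolding q c using \<theta> pos by (simp add: ln_mult ln_div distrib_left)
  also have "\<dots> \<le> (ln M + \<theta> * ln \<tau>) / \<theta>"
    using L \<theta> by (simp add: r_def divide_right_mono)
  also have "\<dots> = ln (M powr (2 / (1 + \<nu>)) * \<tau>)"
    unfolding p using \<theta> pos by (simp add: ln_mult add_divide_distrib)
  finally show ?thesis using \<theta> pos by (simp add: c)
qed

lemma c_nu_pos: "0 \<le> \<nu> \<Longrightarrow> \<nu> \<le> 1 \<Longrightarrow> 0 < c_nu \<nu>"
  by (simp add: c_nu_def)

text \<open>The roles in one step of the method: a is the step coefficient, A' = A + a, G the dual
  norm of the (sub)gradient and F = f(y) - f(x') the decrease, bounded below via Hoelder descent.\<close>
lemma holder_step_rate:
  fixes a A' G F \<epsilon> M \<nu> :: real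
  assumes pos: "0 < a" "0 < A'" "0 < G" "0 < \<epsilon>" "0 < M" and \<nu>: "0 \<le> \<nu>" "\<nu> \<le> 1"
    and eq: "a\<^sup>2 * G\<^sup>2 = 2 * A' * F + \<epsilon> * a"
    and desc: "\<And>t. 0 \<le> t \<Longrightarrow> t * G - M * t powr (1 + \<nu>) / (1 + \<nu>) \<le> F"
  shows "c_nu \<nu> * \<epsilon> powr ((1 - \<nu>) / (1 + \<nu>)) / M powr (2 / (1 + \<nu>)) * A' powr (1 - (1 - \<nu>) / (1 + \<nu>))
           \<le> a powr (2 - (1 - \<nu>) / (1 + \<nu>))"
proof -
  define q where "q = (1 - \<nu>) / (1 + \<nu>)"
  define p where "p = 2 / (1 + \<nu>)"
  define \<tau> where "\<tau> = a\<^sup>2 / A'"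
  define X where "X = a / A'"
  have \<tau>X: "0 < \<tau>" "0 < X" using pos by (simp_all add: \<tau>_def X_def)
  have "\<tau> * G * G - M * (\<tau> * G) powr (1 + \<nu>) / (1 + \<nu>) \<le> F"
    using desc[of "\<tau> * G"] \<tau>X pos by simp
  moreover have "\<tau> * G\<^sup>2 = 2 * F + \<epsilon> * X"
    using eq pos by (simp add: \<tau>_def X_def field_simps)
  ultimately have "\<tau> * G\<^sup>2 + \<epsilon> * X \<le> 2 * M * (\<tau> * G) powr (1 + \<nu>) / (1 + \<nu>)"
    by (simp only: power2_eq_square mult.assoc)
  from young_holder_bound[OF \<tau>X pos(3-5) \<nu> this]
  have "ln (c_nu \<nu> * (\<epsilon> * X) powr q) \<le> ln (M powr p * \<tau>)"
    using c_nu_pos[OF \<nu>] pos \<tau>X by (simp add: q_def p_def)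
  then have "ln (c_nu \<nu>) + q * (ln \<epsilon> + ln a - ln A') \<le> p * ln M + 2 * ln a - ln A'"
    using c_nu_pos[OF \<nu>] pos by (simp add: \<tau>_def X_def ln_mult ln_div power2_eq_square)
  then have "ln (c_nu \<nu> * \<epsilon> powr q / M powr p * A' powr (1 - q)) \<le> ln (a powr (2 - q))"
    using c_nu_pos[OF \<nu>] pos by (simp add: ln_mult ln_div algebra_simps)
  then have "c_nu \<nu> * \<epsilon> powr q / M powr p * A' powr (1 - q) \<le> a powr (2 - q)"
    using c_nu_pos[OF \<nu>] pos by (subst (asm) ln_le_cancel_iff) auto
  then show ?thesis by (simp add: q_def p_def)
qed

lemma powr_le_tangent:
  fixes x y \<gamma> :: real
  assumes "0 < \<gamma>" "\<gamma> \<le> 1" "0 \<le> x" "0 < y"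
  shows "x powr \<gamma> \<le> y powr \<gamma> + \<gamma> * y powr (\<gamma> - 1) * (x - y)"
proof -
  have y: "y * y powr (\<gamma> - 1) = y powr \<gamma>" "y powr (1 - \<gamma>) * y powr (\<gamma> - 1) = 1"
    using assms powr_add[of y 1 "\<gamma> - 1"] powr_add[of y "1 - \<gamma>" "\<gamma> - 1"] by simp_all
  show ?thesis
  proof (cases "x = 0")
    case True
    then show ?thesis using assms y(1) by (simp add: algebra_simps mult.assoc[symmetric])
  next
    case False
    have "x powr \<gamma> * y powr (1 - \<gamma>) \<le> \<gamma> * x + (1 - \<gamma>) * y"
      using assms False by (intro Youngs_inequality_0) auto
    then have "x powr \<gamma> * (y powr (1 - \<gamma>) * y powr (\<gamma> - 1)) \<le> (\<gamma> * x + (1 - \<gamma>) * y) * y powr (\<gamma> - 1)"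
      by (simp add: mult.assoc[symmetric] mult_right_mono)
    then show ?thesis using y by (simp add: algebra_simps)
  qed
qed

text \<open>Summing the concavity bound A_{k+1}^\<gamma> - A_k^\<gamma> \<ge> \<gamma> a_{k+1} A_{k+1}^{\<gamma>-1} \<ge> C^\<gamma>/2
  with \<gamma> = 1/e.\<close>
lemma growth_from_step_rate:
  fixes A a :: "nat \<Rightarrow> real" and C e :: real
  assumes A0: "A 0 = 0" and A_Suc: "\<And>k. A (Suc k) = A k + a (Suc k)"
    and a: "\<And>k. 0 < a (Suc k)" and C: "0 < C" and e: "1 \<le> e" "e \<le> 2"
    and step: "\<And>k. C * A (Suc k) powr (e - 1) \<le> a (Suc k) powr e"
  shows "C * (real k / 2) powr e \<le> A k"
proof -
  have A_nonneg: "0 \<le> A k" for k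
    by (induction k) (use A0 A_Suc a in \<open>auto intro: add_nonneg_pos less_imp_le\<close>)
  define \<gamma> where "\<gamma> = 1 / e"
  have \<gamma>: "0 < \<gamma>" "\<gamma> \<le> 1" "1/2 \<le> \<gamma>" "\<gamma> * e = 1" using e by (auto simp: \<gamma>_def)
  have "real k * C powr \<gamma> / 2 \<le> A k powr \<gamma>" for k
  proof (induction k)
    case (Suc k)
    define A' b where "A' = A (Suc k)" and "b = a (Suc k)"
    have b: "0 < b" and A': "A' = A k + b" "0 < A'"
      using A_Suc[of k] A_nonneg[of k] a[of k] by (auto simp: A'_def b_def)
    have "(C * A' powr (e - 1)) powr \<gamma> \<le> (b powr e) powr \<gamma>"
      using step[of k] C A' \<gamma> by (intro powr_mono2) (auto simp: A'_def b_def)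
    then have "C powr \<gamma> * A' powr (1 - \<gamma>) \<le> b"
      using C A' b \<gamma>(4) by (simp add: powr_mult powr_powr algebra_simps)
    then have "C powr \<gamma> * A' powr (1 - \<gamma>) * A' powr (\<gamma> - 1) \<le> b * A' powr (\<gamma> - 1)"
      by (rule mult_right_mono) simp
    moreover have "A' powr (1 - \<gamma>) * A' powr (\<gamma> - 1) = 1"
      using A' powr_add[of A' "1 - \<gamma>" "\<gamma> - 1"] by simp
    ultimately have "C powr \<gamma> / 2 \<le> (1/2) * (b * A' powr (\<gamma> - 1))" by (simp add: mult.assoc)
    also have "\<dots> \<le> \<gamma> * (b * A' powr (\<gamma> - 1))" by (rule mult_right_mono) (use \<gamma>(3) b in auto)
    also have "\<dots> \<le> A' powr \<gamma> - A k powr \<gamma>"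
      using powr_le_tangent[OF \<gamma>(1,2) A_nonneg[of k] A'(2)] A'(1) by (simp add: algebra_simps)
    finally show ?case using Suc.IH by (simp add: A'_def add_divide_distrib distrib_right)
  qed simp
  then have "(real k * C powr \<gamma> / 2) powr e \<le> (A k powr \<gamma>) powr e"
    using C e by (intro powr_mono2) auto
  then show ?thesis
    using C A_nonneg[of k] \<gamma>(4) by (simp add: powr_mult powr_powr powr_divide mult.commute)
qed

lemma rate_bound_eq:
  assumes "0 \<le> \<nu>"
  shows "rate_bound M \<nu> \<epsilon> k = c_nu \<nu> * \<epsilon> powr ((1 - \<nu>) / (1 + \<nu>)) / M powr (2 / (1 + \<nu>))
           * (real k / 2) powr (2 - (1 - \<nu>) / (1 + \<nu>))"
proof -
  have e: "(1 + 3 * \<nu>) / (1 + \<nu>) = 2 - (1 - \<nu>) / (1 + \<nu>)" using assms by (simp add: field_simps)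
  have "c * (K * E) / (T * P) = c * E / P * (K / T)" for c K E T P :: real
    by (simp add: divide_inverse algebra_simps)
  then show ?thesis unfolding rate_bound_def e powr_divide .
qed

lemma holder_const_finite_bound:
  assumes fin: "holder_const nrm f \<nu> < \<infinity>"
  shows "0 \<le> real_of_ereal (holder_const nrm f \<nu>)"
    and "\<And>x y gx gy. gx \<in> Dset f x \<Longrightarrow> gy \<in> Dset f y \<Longrightarrow>
           dual_norm nrm (gx - gy) \<le> real_of_ereal (holder_const nrm f \<nu>) * hpow (nrm (x - y)) \<nu>"
proof -
  define Ms where "Ms = {M. 0 \<le> M \<and> (\<forall>x y gx gy. gx \<in> Dset f x \<longrightarrow> gy \<in> Dset f y \<longrightarrow>
       dual_norm nrm (gx - gy) \<le> M * hpow (nrm (x - y)) \<nu>)}"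
  have hc: "holder_const nrm f \<nu> = Inf (ereal ` Ms)" unfolding holder_const_def Ms_def ..
  have ne: "Ms \<noteq> {}" using fin by (auto simp: hc top_ereal_def)
  have "bdd_below Ms" unfolding Ms_def by (rule bdd_belowI[of _ 0]) auto
  then have M0: "real_of_ereal (holder_const nrm f \<nu>) = Inf Ms"
    unfolding hc using ereal_Inf'[OF _ ne] by (metis real_of_ereal.simps(1))
  show "0 \<le> real_of_ereal (holder_const nrm f \<nu>)"
    unfolding M0 by (rule cInf_greatest[OF ne]) (auto simp: Ms_def)
  fix x y gx gy assume g: "gx \<in> Dset f x" "gy \<in> Dset f y"
  show "dual_norm nrm (gx - gy) \<le> real_of_ereal (holder_const nrm f \<nu>) * hpow (nrm (x - y)) \<nu>"
  proof (cases "hpow (nrm (x - y)) \<nu> = 0")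
    case True
    obtain M where "M \<in> Ms" using ne by blast
    then have "dual_norm nrm (gx - gy) \<le> M * hpow (nrm (x - y)) \<nu>" using g unfolding Ms_def by blast
    then show ?thesis using True by simp
  next
    case False
    moreover have "0 \<le> hpow (nrm (x - y)) \<nu>" by (simp add: hpow_def)
    ultimately have hp: "0 < hpow (nrm (x - y)) \<nu>" by linarith
    have "dual_norm nrm (gx - gy) / hpow (nrm (x - y)) \<nu> \<le> Inf Ms"
      using g hp by (intro cInf_greatest[OF ne]) (auto simp: Ms_def divide_le_eq)
    then show ?thesis unfolding M0 using hp by (simp add: divide_le_eq)
  qed
qed

section \<open>The method\<close>

locale uagm =
  fixes nrm :: "'a::euclidean_space \<Rightarrow> real"
    and f d :: "'a \<Rightarrow> real" and gd :: "'a \<Rightarrow> 'a" and sharp :: "'a \<Rightarrow> 'a"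
    and \<epsilon> :: real
    and x v y g :: "nat \<Rightarrow> 'a" and \<beta> h a A :: "nat \<Rightarrow> real"
  assumes norm: "is_norm nrm"
    and sharp: "\<And>q. nrm (sharp q) \<le> 1 \<and> q \<bullet> sharp q = dual_norm nrm q"
    and prox: "prox_function nrm d gd"
    and f_class: "convex_on UNIV f \<or> C1_fun f"
    and eps: "\<epsilon> > 0"
    and A0: "A 0 = 0" and v0: "v 0 = x 0"
    and beta: "\<And>k. \<beta> k \<in> {0..1} \<and>
                 (\<forall>b\<in>{0..1}. f (v k + \<beta> k *\<^sub>R (x k - v k)) \<le> f (v k + b *\<^sub>R (x k - v k)))"
    and y_def: "\<And>k. y k = v k + \<beta> k *\<^sub>R (x k - v k)"
    and g_sel: "\<And>k. g k \<in> Dset f (y k) \<and> g k \<bullet> (v k - y k) \<ge> 0"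
    and g_nz: "\<And>k. g k \<noteq> 0"
    and h_min: "\<And>k. h (Suc k) \<ge> 0 \<and>
                 (\<forall>t\<ge>0. f (y k - h (Suc k) *\<^sub>R sharp (g k)) \<le> f (y k - t *\<^sub>R sharp (g k)))"
    and x_next: "\<And>k. x (Suc k) = y k - h (Suc k) *\<^sub>R sharp (g k)"
    and a_next: "\<And>k. let S = {b. A k + b \<noteq> 0 \<and>
                   f (y k) - b\<^sup>2 / (2 * (A k + b)) * (dual_norm nrm (g k))\<^sup>2
                     + \<epsilon> * b / (2 * (A k + b)) = f (x (Suc k))}
                 in a (Suc k) \<in> S \<and> (\<forall>b\<in>S. b \<le> a (Suc k))"
    and A_next: "\<And>k. A (Suc k) = A k + a (Suc k)"
    and v_next: "\<And>k z. psi_fun d gd f (x 0) a y g (Suc k) (v (Suc k))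
                          \<le> psi_fun d gd f (x 0) a y g (Suc k) z"
begin

abbreviation psi :: "nat \<Rightarrow> 'a \<Rightarrow> real" where
  "psi \<equiv> psi_fun d gd f (x 0) a y g"

lemma f_x_Suc_le: "0 \<le> t \<Longrightarrow> f (x (Suc k)) \<le> f (y k - t *\<^sub>R sharp (g k))"
  using h_min[of k] x_next[of k] by simp

lemma f_y_le_f_x: "f (y k) \<le> f (x k)"
proof -
  have "f (y k) \<le> f (v k + 1 *\<^sub>R (x k - v k))"
    using beta[of k] y_def[of k] by (simp del: scaleR_one)
  then show ?thesis by simp
qed

lemma a_Suc_pos_if: "0 \<le> A k \<Longrightarrow> 0 < a (Suc k)"
proof -
  assume "0 \<le> A k"
  moreover have "f (x (Suc k)) \<le> f (y k)" using f_x_Suc_le[of 0 k] by simp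
  ultimately obtain b where "0 < b" "A k + b \<noteq> 0" "f (y k) - b\<^sup>2 / (2 * (A k + b)) * (dual_norm nrm (g k))\<^sup>2
      + \<epsilon> * b / (2 * (A k + b)) = f (x (Suc k))"
    using step_equation_has_positive_root[OF _ _ dual_norm_pos[OF norm g_nz] eps] by blast
  then show ?thesis using a_next[of k] unfolding Let_def by force
qed

lemma A_nonneg: "0 \<le> A k"
  by (induction k) (use A0 A_next a_Suc_pos_if in \<open>auto intro: add_nonneg_pos less_imp_le\<close>)

lemma a_Suc_pos: "0 < a (Suc k)"
  using a_Suc_pos_if A_nonneg by blast

lemma A_Suc_pos: "0 < A (Suc k)"
  using A_next[of k] A_nonneg[of k] a_Suc_pos[of k] by simp

lemma step_identity:
  "(a (Suc k))\<^sup>2 * (dual_norm nrm (g k))\<^sup>2 = 2 * A (Suc k) * (f (y k) - f (x (Suc k))) + \<epsilon> * a (Suc k)"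
  using a_next[of k] step_equation_iff[of "A k" "a (Suc k)" "f (y k)"] by (simp add: Let_def A_next)

lemma psi_min: "psi k (v k) \<le> psi k z"
proof (cases k)
  case 0
  have "d (x 0) + gd (x 0) \<bullet> (z - x 0) + (1/2) * (nrm (z - x 0))\<^sup>2 \<le> d z"
    using prox unfolding prox_function_def by blast
  moreover have "0 \<le> (1/2) * (nrm (z - x 0))\<^sup>2" by simp
  ultimately have "0 \<le> bregman d gd z (x 0)" unfolding bregman_def by linarith
  then show ?thesis using 0 v0 by (simp add: psi_fun_def bregman_def)
qed (use v_next in simp)

lemma psi_growth: "psi k (v k) + (1/2) * (nrm (z - v k))\<^sup>2 \<le> psi k z"
proof -
  obtain l c where "\<forall>z. psi k z = d z + l \<bullet> z + c" using psi_fun_prox_plus_affine by blast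
  then show ?thesis using prox_affine_min_growth[OF prox, of "psi k" l c "v k" z] psi_min by blast
qed

text \<open>In the induction step the term -a G N, coming from g(v_{k+1} - v_k) \<ge> -G N and
  g(v_k - y_k) \<ge> 0, is absorbed by the growth N^2/2 of psi_k around its minimiser; what remains,
  -(a G)^2/2, is turned into -\<epsilon> a/2 by the choice of a.\<close>
lemma estimate_invariant: "A k * f (x k) \<le> psi k (v k) + A k * \<epsilon> / 2"
proof (induction k)
  case 0
  then show ?case using A0 v0 by (simp add: psi_fun_def bregman_def)
next
  case (Suc k)
  define b G N where "b = a (Suc k)" and "G = dual_norm nrm (g k)" and "N = nrm (v (Suc k) - v k)"
  have "psi (Suc k) (v (Suc k)) = psi k (v (Suc k)) + b * f (y k) + b * (g k \<bullet> (v (Suc k) - y k))"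
    by (simp add: psi_fun_def b_def distrib_left)
  moreover have "psi k (v k) + (1/2) * N\<^sup>2 \<le> psi k (v (Suc k))"
    using psi_growth[of k "v (Suc k)"] by (simp add: N_def)
  moreover have "A k * f (y k) \<le> A k * f (x k)"
    using f_y_le_f_x A_nonneg by (simp add: mult_left_mono)
  moreover have "- (G * N) \<le> g k \<bullet> (v (Suc k) - y k)"
  proof -
    have "g k \<bullet> (v k - v (Suc k)) \<le> G * N"
      using inner_le_dual_norm[OF norm] is_norm_minus_commute[OF norm] by (simp add: G_def N_def)
    then show ?thesis using g_sel[of k] by (simp add: inner_diff_right)
  qed
  then have "- (b * G * N) \<le> b * (g k \<bullet> (v (Suc k) - y k))"
    using mult_left_mono[of "- (G * N)" _ b] a_Suc_pos[of k] by (simp add: b_def mult.assoc)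
  moreover have "- ((b * G)\<^sup>2 / 2) \<le> (1/2) * N\<^sup>2 - b * G * N"
    using zero_le_power2[of "N - b * G"] by (simp add: power2_eq_square algebra_simps)
  moreover have "A (Suc k) * f (y k) - (b * G)\<^sup>2 / 2 = A (Suc k) * f (x (Suc k)) - \<epsilon> * b / 2"
    using step_identity[of k] by (simp add: b_def G_def algebra_simps)
  moreover have "A (Suc k) * f (y k) = A k * f (y k) + b * f (y k)"
    and "A (Suc k) * \<epsilon> / 2 = A k * \<epsilon> / 2 + \<epsilon> * b / 2"
    by (simp_all add: A_next b_def algebra_simps add_divide_distrib)
  ultimately show ?case using Suc.IH by linarith
qed

lemma A_ge_rate_bound:
  assumes \<nu>: "\<nu> \<in> {0..1}" and fin: "holder_const nrm f \<nu> < \<infinity>"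
  shows "rate_bound (real_of_ereal (holder_const nrm f \<nu>)) \<nu> \<epsilon> k \<le> A k"
proof -
  define M where "M = real_of_ereal (holder_const nrm f \<nu>)"
  define q where "q = (1 - \<nu>) / (1 + \<nu>)"
  have M: "0 \<le> M" and holder: "\<And>x y gx gy. gx \<in> Dset f x \<Longrightarrow> gy \<in> Dset f y \<Longrightarrow>
      dual_norm nrm (gx - gy) \<le> M * hpow (nrm (x - y)) \<nu>"
    using holder_const_finite_bound[OF fin] by (simp_all add: M_def)
  have \<nu>': "0 \<le> \<nu>" "\<nu> \<le> 1" using \<nu> by auto
  show ?thesis
  proof (cases "M = 0")
    case True
    then show ?thesis using A_nonneg[of k] \<nu>' by (simp add: M_def[symmetric] rate_bound_def)
  next
    case False
    then have "0 < M" using M by simp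
    define C where "C = c_nu \<nu> * \<epsilon> powr q / M powr (2 / (1 + \<nu>))"
    have step: "C * A (Suc j) powr ((2 - q) - 1) \<le> a (Suc j) powr (2 - q)" for j
    proof -
      have "t * dual_norm nrm (g j) - M * t powr (1 + \<nu>) / (1 + \<nu>) \<le> f (y j) - f (x (Suc j))"
        if "0 \<le> t" for t
        using holder_descent[OF norm M \<nu>'(1) _ f_class holder _ that, of "sharp (g j)" "g j" "y j"]
          f_x_Suc_le[OF that, of j] sharp[of "g j"] g_sel[of j] by simp
      from holder_step_rate[OF a_Suc_pos A_Suc_pos dual_norm_pos[OF norm g_nz] eps \<open>0 < M\<close> \<nu>'
          step_identity this]
      show ?thesis by (simp add: C_def q_def)
    qed
    have "0 < C" using c_nu_pos[OF \<nu>'] eps \<open>0 < M\<close> by (simp add: C_def)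
    moreover have "1 \<le> 2 - q" "2 - q \<le> 2" using \<nu>' by (auto simp: q_def field_simps)
    ultimately have "C * (real k / 2) powr (2 - q) \<le> A k"
      by (rule growth_from_step_rate[where A = A and a = a and C = C and e = "2 - q", OF A0 A_next a_Suc_pos _ _ _ step])
    then show ?thesis by (simp add: rate_bound_eq[OF \<nu>'(1)] M_def C_def q_def)
  qed
qed

end

theorem mainTheorem9:
  fixes nrm :: "'a::euclidean_space \<Rightarrow> real"
    and f d :: "'a \<Rightarrow> real" and gd :: "'a \<Rightarrow> 'a" and sharp :: "'a \<Rightarrow> 'a"
    and \<epsilon> :: real
    and x v y g :: "nat \<Rightarrow> 'a" and \<beta> h a A :: "nat \<Rightarrow> real"
  assumes norm: "is_norm nrm"
    and sharp: "\<And>q. nrm (sharp q) \<le> 1 \<and> q \<bullet> sharp q = dual_norm nrm q"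
    and prox: "prox_function nrm d gd"
    and f_class: "convex_on UNIV f \<or> C1_fun f"
    and eps: "\<epsilon> > 0"
    and A0: "A 0 = 0" and v0: "v 0 = x 0"
    and beta: "\<And>k. \<beta> k \<in> {0..1} \<and>
                 (\<forall>b\<in>{0..1}. f (v k + \<beta> k *\<^sub>R (x k - v k)) \<le> f (v k + b *\<^sub>R (x k - v k)))"
    and y_def: "\<And>k. y k = v k + \<beta> k *\<^sub>R (x k - v k)"
    and g_sel: "\<And>k. g k \<in> Dset f (y k) \<and> g k \<bullet> (v k - y k) \<ge> 0"
    and g_nz: "\<And>k. g k \<noteq> 0"
    and h_min: "\<And>k. h (Suc k) \<ge> 0 \<and>
                 (\<forall>t\<ge>0. f (y k - h (Suc k) *\<^sub>R sharp (g k)) \<le> f (y k - t *\<^sub>R sharp (g k)))"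
    and x_next: "\<And>k. x (Suc k) = y k - h (Suc k) *\<^sub>R sharp (g k)"
    and a_next: "\<And>k. let S = {b. A k + b \<noteq> 0 \<and>
                   f (y k) - b\<^sup>2 / (2 * (A k + b)) * (dual_norm nrm (g k))\<^sup>2
                     + \<epsilon> * b / (2 * (A k + b)) = f (x (Suc k))}
                 in a (Suc k) \<in> S \<and> (\<forall>b\<in>S. b \<le> a (Suc k))"
    and A_next: "\<And>k. A (Suc k) = A k + a (Suc k)"
    and v_next: "\<And>k z. psi_fun d gd f (x 0) a y g (Suc k) (v (Suc k))
                          \<le> psi_fun d gd f (x 0) a y g (Suc k) z"
  shows "\<forall>k. (\<forall>z. psi_fun d gd f (x 0) a y g k (v k) \<le> psi_fun d gd f (x 0) a y g k z)
           \<and> A k * f (x k) \<le> psi_fun d gd f (x 0) a y g k (v k) + A k * \<epsilon> / 2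
           \<and> (\<forall>\<nu>\<in>{0..1}. holder_const nrm f \<nu> < \<infinity> \<longrightarrow>
                 rate_bound (real_of_ereal (holder_const nrm f \<nu>)) \<nu> \<epsilon> k \<le> A k)"
proof -
  interpret uagm nrm f d gd sharp \<epsilon> x v y g \<beta> h a A
    using assms by unfold_locales
  show ?thesis using psi_min estimate_invariant A_ge_rate_bound by blast
qed

end
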